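(* (Single-Iteration Progress.) For every expression $e$ and type $\tau$ with $\varnothing\vdash e:\tau$, either $e$ is a value, or there exist an expression $e_i$, an evaluation context $\mathcal{E}$, an expression $e_0$, an action $a'$, an expression $e_0'$ and an expression $e'$ such that $e\to_{\$e,\mathsf{step},\mathsf{one},0} e_i$, $e_i=\mathcal{E}[e_0]$ is a decomposition, $(\mathsf{step},0)\vdash\mathcal{E}\Downarrow a'$, $e_0\to e_0'$, and $e'=({\downarrow}\mathcal{E})[e_0']$.
   Context: This concerns the "filtered stepper calculus". Syntax: actions $a ::= \mathsf{skip} \mid \mathsf{step}$; gas $g ::= \mathsf{one} \mid \mathsf{all}$; priorities $l \in \mathbb{N}$. Patterns $p ::= x \mid p(p) \mid \lambda x.p \mid p+p \mid \underline{n} \mid \$e \mid \$v$ (the pattern typing rules also admit $\mathrm{fix}\,x.p$). A filter is a triple $f=(p,a,g)$. Expressions $e ::= x \mid e(e) \mid \lambda x.e \mid \mathrm{fix}\,x.e \mid e+e \mid \underline{n} \mid \mathrm{filter}_f(e) \mid \langle e\rangle^{a,g,l}$ (the last is called a residue), taken up to $\alpha$-equivalence; $\underline{n}$ ranges over numerals. Evaluation contexts $\mathcal{E} ::= \circ \mid \mathcal{E}(e) \mid e(\mathcal{E}) \mid \mathcal{E}+e \mid e+\mathcal{E} \mid \mathrm{filter}_f(\mathcal{E}) \mid \langle \mathcal{E}\rangle^{a,g,l}$, with exactly one hole; $\mathcal{E}[e]$ is the result of plugging $e$ into the hole. The values are exactly $\lambda x.e$ and numerals $\underline{n}$ (fixpoints,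 filters and residues are never values). Substitution $[v/x]e$ is standard capture-avoiding substitution, which passes through residues unchanged, through filters (substituting also into the filter's pattern), and stops at binders $\lambda x$ and $\mathrm{fix}\,x$ of the same variable. Stripping $|e|$ erases all filter and residue wrappers recursively. Matching $p \triangleright e$ is defined inductively: $\$e \triangleright e$ for all $e$; $\$v \triangleright v$ for every value $v$; $\underline{n}\triangleright\underline{n}$; $\lambda x_1.e_1 \triangleright \lambda x_2.e_2$ if $|e_1| \equiv_\alpha |e_2|$; $\mathrm{fix}\,x_1.e_1 \triangleright \mathrm{fix}\,x_2.e_2$ if $|e_1|\equiv_\alpha |e_2|$; $p_1(p_2)\triangleright e_1(e_2)$ if $p_1\triangleright e_1$ and $p_2\triangleright e_2$; $p_1+p_2\triangleright e_1+e_2$ likewise; there are no other rules. Instrumentation $e \to_{p,a,g,l} e'$ is the inductively defined relation: values and variables and $\mathrm{fix}\,x.e$ are left unchanged; $\langle e_0\rangle^{a',g',l'} \to_{p,a,g,l} \langle e\rangle^{a',g',l'}$ if $e_0\to_{p,a,g,l} e$; $\mathrm{filter}_{(p',a',g')}(e_0)\to_{p,a,g,l}\mathrm{filter}_{(p',a',g')}(e')$ if $e_0\to_{p,a,g,l} e$ and $e \to_{p',a',g',l+1} e'$; for $e_1(e_2)$, if $e_1\to_{p,a,g,l} e_1'$ and $e_2\to_{p,a,g,l} e_2'$ then $e_1(e_2)\to_{p,a,g,l}\langle e_1'(e_2')\rangle^{a,g,l}$ when $p\triangleright e_1(e_2)$ and $e_1(e_2)\to_{p,a,g,l} e_1'(e_2')$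 when not; identically for $e_1+e_2$. Decomposition $e = \mathcal{E}[e_0]$ (with $e_0$ a redex) is the non-deterministic relation: $\langle v\rangle^{a,g,l}$ and $\mathrm{filter}_f(v)$ with $v$ a value decompose as hole $\circ$ with redex themselves; if $e$ decomposes as $\mathcal{E}$ and $e_0$ then $\langle e\rangle^{a,g,l}$ decomposes as $\langle\mathcal{E}\rangle^{a,g,l}$ and $e_0$, and $\mathrm{filter}_f(e)$ as $\mathrm{filter}_f(\mathcal{E})$ and $e_0$; $e_1(e_2)$ decomposes as $\mathcal{E}_1(e_2)$ if $e_1$ decomposes as $\mathcal{E}_1$, as $e_1(\mathcal{E}_2)$ if $e_1$ is a value and $e_2$ decomposes as $\mathcal{E}_2$, and as $\circ$ with redex $e_1(e_2)$ if both are values; identically for $e_1+e_2$; $\mathrm{fix}\,x.e$ decomposes as $\circ$ with redex itself. Instruction transitions $e_0 \to e'$: $(\lambda x.e_1)(v)\to [v/x]e_1$ for a value $v$; $\underline{n_1}+\underline{n_2}\to\underline{n_1+n_2}$; $\mathrm{fix}\,x.e\to[\mathrm{fix}\,x.e/x]e$; $\langle v\rangle^{a,g,l}\to v$ and $\mathrm{filter}_f(v)\to v$ for a value $v$. Decay ${\downarrow}\mathcal{E}$ recursively removes every residue with gas $\mathsf{one}$ (replacing $\langle e\rangle^{a,\mathsf{one},l}$ by the decay of $e$), keeps residues with gas $\mathsf{all}$ and filters, applies recursively to all subterms, and maps the hole to the hole. Action selection $(a,l)\vdash\mathcal{E}\Downarrow a'$: $(a,l)\vdash\circ\Downarrow a$;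 for context nodes of the form application, addition or filter, the judgment passes unchanged into the subcontext containing the hole; $(a_0,l_0)\vdash\langle\mathcal{E}\rangle^{a,g,l}\Downarrow a'$ holds if either $l\le l_0$ and $(a_0,l_0)\vdash\mathcal{E}\Downarrow a'$, or $l>l_0$ and $(a,l)\vdash\mathcal{E}\Downarrow a'$. Typing: types $\tau ::= \mathbb{N}\mid \tau\to\tau$. $\Gamma\vdash e:\tau$ is given by the usual Curry-style simply-typed rules: variables from $\Gamma$; $\lambda x.e : \tau_x\to\tau_e$ if $\Gamma,x{:}\tau_x\vdash e:\tau_e$; application; numerals have type $\mathbb{N}$; $e_1+e_2:\mathbb{N}$ if both summands have type $\mathbb{N}$; $\mathrm{fix}\,x.e:\tau$ if $\Gamma,x{:}\tau\vdash e:\tau$; $\mathrm{filter}_{(p,a,g)}(e):\tau_e$ if $\Gamma\vdash p:\tau_p$ for some $\tau_p$ and $\Gamma\vdash e:\tau_e$; $\langle e\rangle^{a,g,l}:\tau$ if $\Gamma\vdash e:\tau$. Pattern typing $\Gamma\vdash p:\tau$: $\$e$ and $\$v$ have every type; variables, $\lambda$, application, numerals, addition and $\mathrm{fix}$ are typed by the analogous rules. $\varnothing$ is the empty context. *)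

theory Defs
  imports Main
begin

section \<open>Syntax (de Bruijn indices; terms are therefore taken up to alpha-equivalence)\<close>

datatype action = Skip | Step
datatype gas = One | All
datatype ty = TNat | TArr ty ty

datatype pat =
    PVar nat
  | PApp pat pat
  | PLam pat
  | PPlus pat pat
  | PNum nat
  | PAnyE
  | PAnyV
  | PFix pat

datatype exp =
    Var nat
  | App exp exp
  | Lam exp
  | Fix exp
  | Plus exp exp
  | Num nat
  | Filter pat action gas exp
  | Resid exp action gas nat

datatype ctx =
    Hole
  | CAppL ctx exp
  | CAppR exp ctx
  | CPlusL ctx exp
  | CPlusR exp ctx
  | CFilter pat action gas ctx
  | CResid ctx action gas nat

fun plug :: "ctx \<Rightarrow> exp \<Rightarrow> exp" where
  "plug Hole e = e"
| "plug (CAppL E e2) e = App (plug E e) e2"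
| "plug (CAppR e1 E) e = App e1 (plug E e)"
| "plug (CPlusL E e2) e = Plus (plug E e) e2"
| "plug (CPlusR e1 E) e = Plus e1 (plug E e)"
| "plug (CFilter p a g E) e = Filter p a g (plug E e)"
| "plug (CResid E a g l) e = Resid (plug E e) a g l"

fun is_value :: "exp \<Rightarrow> bool" where
  "is_value (Lam e) = True"
| "is_value (Num n) = True"
| "is_value _ = False"

fun strip :: "exp \<Rightarrow> exp" where
  "strip (Var n) = Var n"
| "strip (App e1 e2) = App (strip e1) (strip e2)"
| "strip (Lam e) = Lam (strip e)"
| "strip (Fix e) = Fix (strip e)"
| "strip (Plus e1 e2) = Plus (strip e1) (strip e2)"
| "strip (Num n) = Num n"
| "strip (Filter p a g e) = strip e"
| "strip (Resid e a g l) = strip e"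

text \<open>A wildcard-free pattern read as an expression (used for matching under binders).\<close>
fun pat_exp :: "pat \<Rightarrow> exp option" where
  "pat_exp (PVar n) = Some (Var n)"
| "pat_exp (PApp p1 p2) = (case (pat_exp p1, pat_exp p2) of
      (Some e1, Some e2) \<Rightarrow> Some (App e1 e2) | _ \<Rightarrow> None)"
| "pat_exp (PLam p) = map_option Lam (pat_exp p)"
| "pat_exp (PPlus p1 p2) = (case (pat_exp p1, pat_exp p2) of
      (Some e1, Some e2) \<Rightarrow> Some (Plus e1 e2) | _ \<Rightarrow> None)"
| "pat_exp (PNum n) = Some (Num n)"
| "pat_exp PAnyE = None"
| "pat_exp PAnyV = None"
| "pat_exp (PFix p) = map_option Fix (pat_exp p)"

text \<open>An expression read as a pattern (filter/residue wrappers are stripped);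
  used when substituting into a filter's pattern.\<close>
fun exp_pat :: "exp \<Rightarrow> pat" where
  "exp_pat (Var n) = PVar n"
| "exp_pat (App e1 e2) = PApp (exp_pat e1) (exp_pat e2)"
| "exp_pat (Lam e) = PLam (exp_pat e)"
| "exp_pat (Fix e) = PFix (exp_pat e)"
| "exp_pat (Plus e1 e2) = PPlus (exp_pat e1) (exp_pat e2)"
| "exp_pat (Num n) = PNum n"
| "exp_pat (Filter p a g e) = exp_pat e"
| "exp_pat (Resid e a g l) = exp_pat e"

fun plift :: "nat \<Rightarrow> pat \<Rightarrow> pat" where
  "plift k (PVar n) = (if n < k then PVar n else PVar (Suc n))"
| "plift k (PApp p1 p2) = PApp (plift k p1) (plift k p2)"
| "plift k (PLam p) = PLam (plift (Suc k) p)"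
| "plift k (PPlus p1 p2) = PPlus (plift k p1) (plift k p2)"
| "plift k (PNum n) = PNum n"
| "plift k PAnyE = PAnyE"
| "plift k PAnyV = PAnyV"
| "plift k (PFix p) = PFix (plift (Suc k) p)"

fun lift :: "nat \<Rightarrow> exp \<Rightarrow> exp" where
  "lift k (Var n) = (if n < k then Var n else Var (Suc n))"
| "lift k (App e1 e2) = App (lift k e1) (lift k e2)"
| "lift k (Lam e) = Lam (lift (Suc k) e)"
| "lift k (Fix e) = Fix (lift (Suc k) e)"
| "lift k (Plus e1 e2) = Plus (lift k e1) (lift k e2)"
| "lift k (Num n) = Num n"
| "lift k (Filter p a g e) = Filter (plift k p) a g (lift k e)"
| "lift k (Resid e a g l) = Resid (lift k e) a g l"

fun psubst :: "nat \<Rightarrow> exp \<Rightarrow> pat \<Rightarrow> pat" where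
  "psubst k v (PVar n) = (if n = k then exp_pat v else if k < n then PVar (n - 1) else PVar n)"
| "psubst k v (PApp p1 p2) = PApp (psubst k v p1) (psubst k v p2)"
| "psubst k v (PLam p) = PLam (psubst (Suc k) (lift 0 v) p)"
| "psubst k v (PPlus p1 p2) = PPlus (psubst k v p1) (psubst k v p2)"
| "psubst k v (PNum n) = PNum n"
| "psubst k v PAnyE = PAnyE"
| "psubst k v PAnyV = PAnyV"
| "psubst k v (PFix p) = PFix (psubst (Suc k) (lift 0 v) p)"

fun subst :: "nat \<Rightarrow> exp \<Rightarrow> exp \<Rightarrow> exp" where
  "subst k v (Var n) = (if n = k then v else if k < n then Var (n - 1) else Var n)"
| "subst k v (App e1 e2) = App (subst k v e1) (subst k v e2)"
| "subst k v (Lam e) = Lam (subst (Suc k) (lift 0 v) e)"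
| "subst k v (Fix e) = Fix (subst (Suc k) (lift 0 v) e)"
| "subst k v (Plus e1 e2) = Plus (subst k v e1) (subst k v e2)"
| "subst k v (Num n) = Num n"
| "subst k v (Filter p a g e) = Filter (psubst k v p) a g (subst k v e)"
| "subst k v (Resid e a g l) = Resid (subst k v e) a g l"

inductive matches :: "pat \<Rightarrow> exp \<Rightarrow> bool" where
  m_anye: "matches PAnyE e"
| m_anyv: "is_value v \<Longrightarrow> matches PAnyV v"
| m_num: "matches (PNum n) (Num n)"
| m_lam: "pat_exp p = Some e1 \<Longrightarrow> strip e1 = strip e2 \<Longrightarrow> matches (PLam p) (Lam e2)"
| m_fix: "pat_exp p = Some e1 \<Longrightarrow> strip e1 = strip e2 \<Longrightarrow> matches (PFix p) (Fix e2)"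
| m_app: "matches p1 e1 \<Longrightarrow> matches p2 e2 \<Longrightarrow> matches (PApp p1 p2) (App e1 e2)"
| m_plus: "matches p1 e1 \<Longrightarrow> matches p2 e2 \<Longrightarrow> matches (PPlus p1 p2) (Plus e1 e2)"

inductive instr :: "exp \<Rightarrow> pat \<Rightarrow> action \<Rightarrow> gas \<Rightarrow> nat \<Rightarrow> exp \<Rightarrow> bool" where
  i_var: "instr (Var n) p a g l (Var n)"
| i_lam: "instr (Lam e) p a g l (Lam e)"
| i_num: "instr (Num n) p a g l (Num n)"
| i_fix: "instr (Fix e) p a g l (Fix e)"
| i_resid: "instr e0 p a g l e \<Longrightarrow> instr (Resid e0 a' g' l') p a g l (Resid e a' g' l')"
| i_filter: "instr e0 p a g l e \<Longrightarrow> instr e p' a' g' (Suc l) e' \<Longrightarrow>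
     instr (Filter p' a' g' e0) p a g l (Filter p' a' g' e')"
| i_app_m: "instr e1 p a g l e1' \<Longrightarrow> instr e2 p a g l e2' \<Longrightarrow> matches p (App e1 e2) \<Longrightarrow>
     instr (App e1 e2) p a g l (Resid (App e1' e2') a g l)"
| i_app_n: "instr e1 p a g l e1' \<Longrightarrow> instr e2 p a g l e2' \<Longrightarrow> \<not> matches p (App e1 e2) \<Longrightarrow>
     instr (App e1 e2) p a g l (App e1' e2')"
| i_plus_m: "instr e1 p a g l e1' \<Longrightarrow> instr e2 p a g l e2' \<Longrightarrow> matches p (Plus e1 e2) \<Longrightarrow>
     instr (Plus e1 e2) p a g l (Resid (Plus e1' e2') a g l)"
| i_plus_n: "instr e1 p a g l e1' \<Longrightarrow> instr e2 p a g l e2' \<Longrightarrow> \<not> matches p (Plus e1 e2) \<Longrightarrow>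
     instr (Plus e1 e2) p a g l (Plus e1' e2')"

inductive decomp :: "exp \<Rightarrow> ctx \<Rightarrow> exp \<Rightarrow> bool" where
  d_resid_v: "is_value v \<Longrightarrow> decomp (Resid v a g l) Hole (Resid v a g l)"
| d_filter_v: "is_value v \<Longrightarrow> decomp (Filter p a g v) Hole (Filter p a g v)"
| d_resid: "decomp e E e0 \<Longrightarrow> decomp (Resid e a g l) (CResid E a g l) e0"
| d_filter: "decomp e E e0 \<Longrightarrow> decomp (Filter p a g e) (CFilter p a g E) e0"
| d_appL: "decomp e1 E1 e0 \<Longrightarrow> decomp (App e1 e2) (CAppL E1 e2) e0"
| d_appR: "is_value e1 \<Longrightarrow> decomp e2 E2 e0 \<Longrightarrow> decomp (App e1 e2) (CAppR e1 E2) e0"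
| d_app: "is_value e1 \<Longrightarrow> is_value e2 \<Longrightarrow> decomp (App e1 e2) Hole (App e1 e2)"
| d_plusL: "decomp e1 E1 e0 \<Longrightarrow> decomp (Plus e1 e2) (CPlusL E1 e2) e0"
| d_plusR: "is_value e1 \<Longrightarrow> decomp e2 E2 e0 \<Longrightarrow> decomp (Plus e1 e2) (CPlusR e1 E2) e0"
| d_plus: "is_value e1 \<Longrightarrow> is_value e2 \<Longrightarrow> decomp (Plus e1 e2) Hole (Plus e1 e2)"
| d_fix: "decomp (Fix e) Hole (Fix e)"

inductive istep :: "exp \<Rightarrow> exp \<Rightarrow> bool" where
  s_beta: "is_value v \<Longrightarrow> istep (App (Lam e) v) (subst 0 v e)"
| s_plus: "istep (Plus (Num n1) (Num n2)) (Num (n1 + n2))"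
| s_fix: "istep (Fix e) (subst 0 (Fix e) e)"
| s_resid: "is_value v \<Longrightarrow> istep (Resid v a g l) v"
| s_filter: "is_value v \<Longrightarrow> istep (Filter p a g v) v"

fun decay_exp :: "exp \<Rightarrow> exp" where
  "decay_exp (Var n) = Var n"
| "decay_exp (App e1 e2) = App (decay_exp e1) (decay_exp e2)"
| "decay_exp (Lam e) = Lam (decay_exp e)"
| "decay_exp (Fix e) = Fix (decay_exp e)"
| "decay_exp (Plus e1 e2) = Plus (decay_exp e1) (decay_exp e2)"
| "decay_exp (Num n) = Num n"
| "decay_exp (Filter p a g e) = Filter p a g (decay_exp e)"
| "decay_exp (Resid e a g l) = (case g of One \<Rightarrow> decay_exp e | All \<Rightarrow> Resid (decay_exp e) a All l)"

fun decay :: "ctx \<Rightarrow> ctx" where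
  "decay Hole = Hole"
| "decay (CAppL E e2) = CAppL (decay E) (decay_exp e2)"
| "decay (CAppR e1 E) = CAppR (decay_exp e1) (decay E)"
| "decay (CPlusL E e2) = CPlusL (decay E) (decay_exp e2)"
| "decay (CPlusR e1 E) = CPlusR (decay_exp e1) (decay E)"
| "decay (CFilter p a g E) = CFilter p a g (decay E)"
| "decay (CResid E a g l) = (case g of One \<Rightarrow> decay E | All \<Rightarrow> CResid (decay E) a All l)"

inductive sel :: "action \<Rightarrow> nat \<Rightarrow> ctx \<Rightarrow> action \<Rightarrow> bool" where
  sel_hole: "sel a l Hole a"
| sel_appL: "sel a l E a' \<Longrightarrow> sel a l (CAppL E e) a'"
| sel_appR: "sel a l E a' \<Longrightarrow> sel a l (CAppR e E) a'"
| sel_plusL: "sel a l E a' \<Longrightarrow> sel a l (CPlusL E e) a'"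
| sel_plusR: "sel a l E a' \<Longrightarrow> sel a l (CPlusR e E) a'"
| sel_filter: "sel a l E a' \<Longrightarrow> sel a l (CFilter p af gf E) a'"
| sel_resid_le: "l \<le> l0 \<Longrightarrow> sel a0 l0 E a' \<Longrightarrow> sel a0 l0 (CResid E a g l) a'"
| sel_resid_gt: "l > l0 \<Longrightarrow> sel a l E a' \<Longrightarrow> sel a0 l0 (CResid E a g l) a'"

inductive pat_typing :: "ty list \<Rightarrow> pat \<Rightarrow> ty \<Rightarrow> bool" where
  pt_anye: "pat_typing \<Gamma> PAnyE \<tau>"
| pt_anyv: "pat_typing \<Gamma> PAnyV \<tau>"
| pt_var: "n < length \<Gamma> \<Longrightarrow> pat_typing \<Gamma> (PVar n) (\<Gamma> ! n)"
| pt_lam: "pat_typing (\<tau>x # \<Gamma>) p \<tau> \<Longrightarrow> pat_typing \<Gamma> (PLam p) (TArr \<tau>x \<tau>)"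
| pt_app: "pat_typing \<Gamma> p1 (TArr \<tau>1 \<tau>2) \<Longrightarrow> pat_typing \<Gamma> p2 \<tau>1 \<Longrightarrow> pat_typing \<Gamma> (PApp p1 p2) \<tau>2"
| pt_num: "pat_typing \<Gamma> (PNum n) TNat"
| pt_plus: "pat_typing \<Gamma> p1 TNat \<Longrightarrow> pat_typing \<Gamma> p2 TNat \<Longrightarrow> pat_typing \<Gamma> (PPlus p1 p2) TNat"
| pt_fix: "pat_typing (\<tau> # \<Gamma>) p \<tau> \<Longrightarrow> pat_typing \<Gamma> (PFix p) \<tau>"

inductive typing :: "ty list \<Rightarrow> exp \<Rightarrow> ty \<Rightarrow> bool" where
  t_var: "n < length \<Gamma> \<Longrightarrow> typing \<Gamma> (Var n) (\<Gamma> ! n)"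
| t_lam: "typing (\<tau>x # \<Gamma>) e \<tau> \<Longrightarrow> typing \<Gamma> (Lam e) (TArr \<tau>x \<tau>)"
| t_app: "typing \<Gamma> e1 (TArr \<tau>1 \<tau>2) \<Longrightarrow> typing \<Gamma> e2 \<tau>1 \<Longrightarrow> typing \<Gamma> (App e1 e2) \<tau>2"
| t_num: "typing \<Gamma> (Num n) TNat"
| t_plus: "typing \<Gamma> e1 TNat \<Longrightarrow> typing \<Gamma> e2 TNat \<Longrightarrow> typing \<Gamma> (Plus e1 e2) TNat"
| t_fix: "typing (\<tau> # \<Gamma>) e \<tau> \<Longrightarrow> typing \<Gamma> (Fix e) \<tau>"
| t_filter: "pat_typing \<Gamma> p \<tau>p \<Longrightarrow> typing \<Gamma> e \<tau> \<Longrightarrow> typing \<Gamma> (Filter p a g e) \<tau>"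
| t_resid: "typing \<Gamma> e \<tau> \<Longrightarrow> typing \<Gamma> (Resid e a g l) \<tau>"

end

theory Submission
  imports Defs
begin

text \<open>Instrumentation is total, preserves types and never turns a non-value into a value. So a
  closed well-typed non-value instruments to a closed well-typed non-value, which by the usual
  progress argument (extended to filters and residues) decomposes into a redex that steps. Action
  selection is total as well.\<close>

text \<open>Instrumentation of a filter re-instruments the already instrumented body, which may have
  grown by residues. A size that ignores residues is invariant under instrumentation and still
  decreases into filter bodies.\<close>
fun size_without_resid :: "exp \<Rightarrow> nat" where
  "size_without_resid (Var n) = 1"
| "size_without_resid (App e1 e2) = Suc (size_without_resid e1 + size_without_resid e2)"
| "size_without_resid (Lam e) = Suc (size_without_resid e)"
| "size_without_resid (Fix e) = Suc (size_without_resid e)"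
| "size_without_resid (Plus e1 e2) = Suc (size_without_resid e1 + size_without_resid e2)"
| "size_without_resid (Num n) = 1"
| "size_without_resid (Filter p a g e) = Suc (size_without_resid e)"
| "size_without_resid (Resid e a g l) = size_without_resid e"

lemma instr_size_without_resid:
  "instr e p a g l e' \<Longrightarrow> size_without_resid e' = size_without_resid e"
  by (induction rule: instr.induct) auto

lemma instr_exists: "\<exists>e'. instr e p a g l e'"
proof (induction e arbitrary: p a g l rule: wf_induct[OF wf_measures[of "[size_without_resid, size]"]])
  case (1 e)
  then have IH: "\<exists>e'. instr e1 p a g l e'"
    if "(e1, e) \<in> measures [size_without_resid, size]" for e1 p a g l
    using that by blast
  show ?case
  proof (cases e)
    case (App e1 e2)
    obtain e1' e2' where "instr e1 p a g l e1'" and "instr e2 p a g l e2'"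
      using IH App by fastforce
    then show ?thesis using i_app_m i_app_n App by blast
  next
    case (Plus e1 e2)
    obtain e1' e2' where "instr e1 p a g l e1'" and "instr e2 p a g l e2'"
      using IH Plus by fastforce
    then show ?thesis using i_plus_m i_plus_n Plus by blast
  next
    case (Resid e0 a' g' l')
    obtain e1 where "instr e0 p a g l e1" using IH Resid by fastforce
    then show ?thesis using i_resid Resid by blast
  next
    case (Filter p' a' g' e0)
    obtain e1 where e1: "instr e0 p a g l e1" using IH Filter by fastforce
    then have "size_without_resid e1 < size_without_resid e"
      using instr_size_without_resid Filter by simp
    then obtain e2 where "instr e1 p' a' g' (Suc l) e2" using IH by fastforce
    then show ?thesis using e1 i_filter Filter by blast
  qed (auto intro: i_var i_lam i_num i_fix)
qed

inductive_cases typing_elims: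
  "typing \<Gamma> (Var n) \<tau>" "typing \<Gamma> (Lam e) \<tau>" "typing \<Gamma> (App e1 e2) \<tau>"
  "typing \<Gamma> (Plus e1 e2) \<tau>" "typing \<Gamma> (Num n) \<tau>"
  "typing \<Gamma> (Filter p a g e) \<tau>" "typing \<Gamma> (Resid e a g l) \<tau>"

lemma instr_preserves_typing: "instr e p a g l e' \<Longrightarrow> typing \<Gamma> e \<tau> \<Longrightarrow> typing \<Gamma> e' \<tau>"
  by (induction arbitrary: \<tau> rule: instr.induct) (blast elim: typing_elims intro: typing.intros)+

lemma instr_preserves_non_value: "instr e p a g l e' \<Longrightarrow> \<not> is_value e \<Longrightarrow> \<not> is_value e'"
  by (induction rule: instr.induct) auto


lemma canonical_form_arrow: "typing \<Gamma> v (TArr \<tau>1 \<tau>2) \<Longrightarrow> is_value v \<Longrightarrow> \<exists>b. v = Lam b"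
  by (cases v) (auto elim: typing_elims)

lemma canonical_form_nat: "typing \<Gamma> v TNat \<Longrightarrow> is_value v \<Longrightarrow> \<exists>n. v = Num n"
  by (cases v) (auto elim: typing_elims)

lemma progress:
  assumes "typing [] e \<tau>"
  shows "is_value e \<or> (\<exists>E e0 e0'. decomp e E e0 \<and> istep e0 e0')"
  using assms
proof (induction "[] :: ty list" e \<tau> rule: typing.induct)
  case (t_app e1 \<tau>1 \<tau>2 e2)
  show ?case
  proof (cases "is_value e1 \<and> is_value e2")
    case True
    then obtain b where "e1 = Lam b" using canonical_form_arrow t_app.hyps(1) by blast
    then show ?thesis using True by (blast intro: d_app s_beta)
  next
    case False
    then show ?thesis using t_app by (blast intro: d_appL d_appR)
  qed
next
  case (t_plus e1 e2)
  show ?case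
  proof (cases "is_value e1 \<and> is_value e2")
    case True
    then obtain n1 n2 where "e1 = Num n1" and "e2 = Num n2"
      using canonical_form_nat t_plus.hyps(1,3) by blast
    then show ?thesis using True by (blast intro: d_plus s_plus)
  next
    case False
    then show ?thesis using t_plus by (blast intro: d_plusL d_plusR)
  qed
next
  case (t_filter p \<tau>p e \<tau> a g)
  then show ?case by (blast intro: d_filter_v s_filter d_filter)
next
  case (t_resid e \<tau> a g l)
  then show ?case by (blast intro: d_resid_v s_resid d_resid)
qed (auto intro: d_fix s_fix)

lemma sel_exists: "\<exists>a'. sel a l E a'"
proof (induction E arbitrary: a l)
  case (CResid E a\<^sub>r g l\<^sub>r)
  show ?case
  proof (cases "l\<^sub>r \<le> l")
    case True
    then show ?thesis using CResid sel_resid_le by blast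
  next
    case False
    then show ?thesis using CResid sel_resid_gt[of l l\<^sub>r] by (meson not_le)
  qed
qed (meson sel.intros)+

theorem theorem3:
  assumes "typing [] e \<tau>"
  shows "is_value e \<or>
    (\<exists>ei E e0 a' e0' e'.
        instr e PAnyE Step One 0 ei \<and> decomp ei E e0 \<and> sel Step 0 E a' \<and>
        istep e0 e0' \<and> e' = plug (decay E) e0')"
proof (cases "is_value e")
  case False
  obtain ei where instr: "instr e PAnyE Step One 0 ei" using instr_exists by blast
  have "typing [] ei \<tau>" using instr_preserves_typing[OF instr assms] .
  moreover have "\<not> is_value ei" using instr_preserves_non_value[OF instr False] .
  ultimately obtain E e0 e0' where "decomp ei E e0" and "istep e0 e0'"
    using progress by blast
  moreover obtain a' where "sel Step 0 E a'" using sel_exists by blast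
  ultimately show ?thesis using instr by blast
qed simp

end
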